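(* Suppose $\|W_{\theta,\lambda}\|_{\mathrm{tr}}\le\rho$ for all $\theta\in\Theta$, $\lambda\in\Lambda$, and that each $k_\theta$ is stationary: $k_\theta(x,x')=\tilde k_\theta(\|x-x'\|)$ for some $\tilde k_\theta:[0,\infty)\to[0,\infty)$. For $\tilde\theta\in\Theta$ let $\Theta(\tilde\theta):=\{\theta\in\Theta: k_\theta(0,0)\le k_{\tilde\theta}(0,0)\}$ (where $k_\theta(0,0)=\tilde k_\theta(0)$). Then for any $\tilde\theta\in\Theta$ and any training observations $\{(x_i,y_i)\}_{i=1}^n$, $$\mathcal{R}_n(F_n(\Theta(\tilde\theta),\Lambda))\le 2\rho\sqrt{k_{\tilde\theta}(0,0)}.$$
   Context: MCE class setting: $\mathcal{X}\subseteq\mathbb{R}^d$, $\mathcal{Y}=\mathbb{N}_m:=\{1,\dots,m\}$, $\{k_\theta\}_{\theta\in\Theta}$ is a family of symmetric positive definite kernels on $\mathcal{X}$ with RKHS $\mathcal{H}_{k_\theta}$ and feature map $\phi_\theta(x)=k_\theta(x,\cdot)$, and $\Lambda\subseteq(0,\infty)$. Fix training observations $\{(x_i,y_i)\}_{i=1}^n\subset\mathcal{X}\times\mathbb{N}_m$; let $\mathbf{Y}\in\{0,1\}^{n\times m}$ with $\mathbf{Y}_{ic}=\mathbb{1}[y_i=c]$, $(K_\theta)_{ij}=k_\theta(x_i,x_j)$, $\mathbf{k}_\theta(x)=(k_\theta(x_i,x))_{i=1}^n$, $\Phi_\theta=[\phi_\theta(x_1)\cdots\phi_\theta(x_n)]$.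 The MCE decision function is $\mathbf{f}_{\theta,\lambda}(x):=\mathbf{Y}^T(K_\theta+n\lambda I)^{-1}\mathbf{k}_\theta(x)\in\mathbb{R}^m$, which equals $W_{\theta,\lambda}^T\phi_\theta(x)$ for $W_{\theta,\lambda}:=\Phi_\theta(K_\theta+n\lambda I)^{-1}\mathbf{Y}$; its trace norm is $\|W_{\theta,\lambda}\|_{\mathrm{tr}}=\sqrt{\mathrm{trace}(\mathbf{Y}^T(K_\theta+n\lambda I)^{-1}K_\theta(K_\theta+n\lambda I)^{-1}\mathbf{Y})}$. For $\Theta'\subseteq\Theta$, $F_n(\Theta',\Lambda):=\{\mathbf{f}_{\theta,\lambda}:\theta\in\Theta',\lambda\in\Lambda\}$. For a class $F$ of functions $\mathcal{X}\to\mathbb{R}^m$, $\mathcal{R}_n(F):=\mathbb{E}\big[\sup_{f\in F}\|\tfrac{2}{n}\sum_{i=1}^n\sigma_i f(X_i)\|\big]$, with Euclidean norm, $\sigma_i$ i.i.d. uniform on $\{-1,1\}$, and $X_i$ i.i.d. from $\mathbb{P}_X$ independent of the $\sigma_i$. *)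

theory Defs
  imports "HOL-Analysis.Analysis" "HOL-Probability.Probability"
begin

definition spd_kernel :: "'a set \<Rightarrow> ('a \<Rightarrow> 'a \<Rightarrow> real) \<Rightarrow> bool" where
  "spd_kernel X k \<longleftrightarrow>
     (\<forall>x\<in>X. \<forall>x'\<in>X. k x x' = k x' x) \<and>
     (\<forall>(xs::'a list) (c::real list). set xs \<subseteq> X \<longrightarrow> length c = length xs \<longrightarrow>
        (\<Sum>i<length xs. \<Sum>j<length xs. c!i * c!j * k (xs!i) (xs!j)) \<ge> 0)"

text \<open>Training data are indexed by a finite type 'n (so n = CARD('n)); labels by a finite
  type 'm (so m = CARD('m)).\<close>

definition label_matrix :: "('n::finite \<Rightarrow> 'm::finite) \<Rightarrow> real^'m^'n" where
  "label_matrix y = (\<chi> i c. if y i = c then 1 else 0)"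

definition gram :: "('a \<Rightarrow> 'a \<Rightarrow> real) \<Rightarrow> ('n::finite \<Rightarrow> 'a) \<Rightarrow> real^'n^'n" where
  "gram k xs = (\<chi> i j. k (xs i) (xs j))"

definition kvec :: "('a \<Rightarrow> 'a \<Rightarrow> real) \<Rightarrow> ('n::finite \<Rightarrow> 'a) \<Rightarrow> 'a \<Rightarrow> real^'n" where
  "kvec k xs x = (\<chi> i. k (xs i) x)"

definition reg_inv :: "('a \<Rightarrow> 'a \<Rightarrow> real) \<Rightarrow> ('n::finite \<Rightarrow> 'a) \<Rightarrow> real \<Rightarrow> real^'n^'n" where
  "reg_inv k xs lam = matrix_inv (gram k xs + (real CARD('n) * lam) *\<^sub>R mat 1)"

definition mce_f :: "('a \<Rightarrow> 'a \<Rightarrow> real) \<Rightarrow> ('n::finite \<Rightarrow> 'a) \<Rightarrow> ('n \<Rightarrow> 'm::finite) \<Rightarrow> real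
                    \<Rightarrow> 'a \<Rightarrow> real^'m" where
  "mce_f k xs y lam x = transpose (label_matrix y) *v (reg_inv k xs lam *v kvec k xs x)"

text \<open>Trace norm of W_{theta,lambda} as given in the paper:
  sqrt(trace(Y^T A^{-1} K A^{-1} Y)), A = K + n lambda I.\<close>
definition mce_tr_norm :: "('a \<Rightarrow> 'a \<Rightarrow> real) \<Rightarrow> ('n::finite \<Rightarrow> 'a) \<Rightarrow> ('n \<Rightarrow> 'm::finite) \<Rightarrow> real \<Rightarrow> real" where
  "mce_tr_norm k xs y lam =
     sqrt (trace (transpose (label_matrix y) ** reg_inv k xs lam ** gram k xs ** reg_inv k xs lam
                  ** label_matrix y))"

definition mce_class :: "('th \<Rightarrow> 'a \<Rightarrow> 'a \<Rightarrow> real) \<Rightarrow> ('n::finite \<Rightarrow> 'a) \<Rightarrow> ('n \<Rightarrow> 'm::finite)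
                        \<Rightarrow> 'th set \<Rightarrow> real set \<Rightarrow> ('a \<Rightarrow> real^'m) set" where
  "mce_class k xs y Th L = {mce_f (k th) xs y lam | th lam. th \<in> Th \<and> lam \<in> L}"

text \<open>Rademacher complexity R_n(F) with n = CARD('n): expectation over X_1..X_n iid from P
  and independent Rademacher signs (uniform average over {-1,1}^n), of
  sup_{f in F} || (2/n) sum_i sigma_i f(X_i) ||.  Valued in ennreal (the supremum may be infinite).\<close>
definition rademacher_complexity :: "'n::finite itself \<Rightarrow> 'a measure \<Rightarrow> ('a \<Rightarrow> real^'m) set \<Rightarrow> ennreal" where
  "rademacher_complexity _ P F =
     (\<integral>\<^sup>+ Xs. (\<Sum>\<sigma>\<in>(UNIV::'n set) \<rightarrow>\<^sub>E {-1, 1::real}.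
                   (SUP f\<in>F. ennreal (norm ((2 / real CARD('n)) *\<^sub>R (\<Sum>i\<in>UNIV. \<sigma> i *\<^sub>R f (Xs i))))))
               / 2 ^ CARD('n)
      \<partial>(PiM (UNIV::'n set) (\<lambda>_. P)))"

end

theory Submission
  imports Defs
begin

text \<open>Write beta = (K + n lambda I)^-1 Y. The c-th component of the MCE function is the
  kernel expansion x |-> sum_j beta_jc k(x_j, x), and the squared trace norm is
  sum_c beta_c^T K beta_c. Cauchy-Schwarz for the positive semidefinite kernel bounds
  |f_c(x)|^2 by k(x,x) beta_c^T K beta_c, so ||f(x)|| <= ||W||_tr sqrt(k(x,x)). Stationarity
  gives k(x,x) = k_th(0,0) <= k_th0(0,0), so the whole class is uniformly bounded by
  rho sqrt(k_th0(0,0)); and a uniform bound C bounds every Rademacher average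
  (2/n) sum_i sigma_i f(X_i) by 2C.\<close>

text \<open>The squared RKHS norm of sum_i v_i k(x_i, -).\<close>
definition gram_form :: "('a \<Rightarrow> 'a \<Rightarrow> real) \<Rightarrow> ('n::finite \<Rightarrow> 'a) \<Rightarrow> ('n \<Rightarrow> real) \<Rightarrow> real" where
  "gram_form k xs v = (\<Sum>i\<in>UNIV. \<Sum>j\<in>UNIV. v i * v j * k (xs i) (xs j))"

lemma spd_kernel_sum_nonneg:
  assumes "spd_kernel X k" "finite I" "\<forall>i\<in>I. p i \<in> X"
  shows "0 \<le> (\<Sum>i\<in>I. \<Sum>j\<in>I. c i * c j * k (p i) (p j))"
proof -
  obtain ls where ls: "set ls = I" "distinct ls" using finite_distinct_list[OF assms(2)] by blast
  have reindex: "(\<Sum>i\<in>I. (g i :: real)) = (\<Sum>i<length ls. g (ls!i))" for g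
  proof -
    have "inj_on ((!) ls) {..<length ls}" using ls(2) by (simp add: inj_on_nth)
    moreover have "(!) ls ` {..<length ls} = I" using ls(1) by (auto simp: set_conv_nth)
    ultimately show ?thesis using sum.reindex[of "(!) ls" "{..<length ls}" g] by simp
  qed
  have "set (map p ls) \<subseteq> X" using ls(1) assms(3) by auto
  then have "0 \<le> (\<Sum>i<length ls. \<Sum>j<length ls. c (ls!i) * c (ls!j) * k (p (ls!i)) (p (ls!j)))"
    using assms(1) unfolding spd_kernel_def by (auto dest!: spec[of _ "map p ls"] spec[of _ "map c ls"])
  then show ?thesis by (simp only: reindex)
qed

lemma gram_form_nonneg:
  assumes "spd_kernel X k" "\<forall>i. xs i \<in> X"
  shows "0 \<le> gram_form k xs v"
  using spd_kernel_sum_nonneg[OF assms(1), of UNIV xs v] assms(2) by (simp add: gram_form_def)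

lemma spd_kernel_diag_nonneg:
  assumes "spd_kernel X k" "x \<in> X"
  shows "0 \<le> k x x"
  using spd_kernel_sum_nonneg[OF assms(1), of "{()}" "\<lambda>_. x" "\<lambda>_. 1"] assms(2) by simp

lemma nonneg_quadratic_discriminant:
  fixes a b c :: real
  assumes "\<forall>t. 0 \<le> a*t^2 + 2*b*t + c" "0 \<le> a"
  shows "b^2 \<le> a*c"
proof (cases "a = 0")
  case True
  show ?thesis
  proof (rule ccontr)
    assume "\<not> ?thesis"
    then have "b \<noteq> 0" using True by simp
    have "0 \<le> 2*b*(-(c+1)/(2*b)) + c" using assms(1) True by (metis add.left_neutral mult_zero_left)
    also have "\<dots> = -1" using \<open>b \<noteq> 0\<close> by (simp add: field_simps)
    finally show False by simp
  qed
next
  case False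
  then have a: "a > 0" using assms(2) by simp
  have "0 \<le> a*(-b/a)^2 + 2*b*(-b/a) + c" using assms(1) by blast
  also have "\<dots> = (a*c - b^2)/a" using a by (simp add: field_simps power2_eq_square)
  finally show ?thesis using a by (simp add: zero_le_divide_iff)
qed

lemma sum_UNIV_option:
  "(\<Sum>i\<in>(UNIV::'a::finite option set). g i) = g None + (\<Sum>i\<in>UNIV. g (Some i))"
proof -
  have "(\<Sum>i\<in>(UNIV::'a option set). g i) = g None + (\<Sum>i\<in>range Some. g i)"
    by (simp add: UNIV_option_conv)
  also have "(\<Sum>i\<in>range Some. g i) = (\<Sum>i\<in>UNIV. g (Some i))"
    by (subst sum.reindex) (auto simp: inj_on_def)
  finally show ?thesis .
qed

text \<open>Positivity of the Gram form on the points xs extended by x yields a nonnegative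
  quadratic polynomial in the coefficient t of x; its discriminant is the claimed bound.\<close>
lemma spd_kernel_Cauchy_Schwarz:
  fixes xs :: "'n::finite \<Rightarrow> 'a"
  assumes "spd_kernel X k" "\<forall>i. xs i \<in> X" "x \<in> X"
  shows "(\<Sum>j\<in>UNIV. v j * k (xs j) x)^2 \<le> k x x * gram_form k xs v"
proof -
  let ?b = "\<Sum>j\<in>UNIV. v j * k (xs j) x"
  have sym: "\<And>j. k x (xs j) = k (xs j) x" using assms unfolding spd_kernel_def by metis
  have "0 \<le> k x x * t^2 + 2 * ?b * t + gram_form k xs v" for t
  proof -
    define p where "p = (\<lambda>z. case z of None \<Rightarrow> x | Some i \<Rightarrow> xs i)"
    define c where "c = (\<lambda>z. case z of None \<Rightarrow> t | Some i \<Rightarrow> v i)"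
    have "0 \<le> (\<Sum>i\<in>(UNIV::'n option set). \<Sum>j\<in>UNIV. c i * c j * k (p i) (p j))"
      by (rule spd_kernel_sum_nonneg[OF assms(1)]) (auto simp: p_def assms split: option.splits)
    also have "\<dots> = k x x * t^2 + 2 * ?b * t + gram_form k xs v"
      by (simp add: sum_UNIV_option p_def c_def gram_form_def sym sum.distrib sum_distrib_left
            sum_distrib_right power2_eq_square algebra_simps)
    finally show ?thesis .
  qed
  then show ?thesis
    using nonneg_quadratic_discriminant spd_kernel_diag_nonneg[OF assms(1,3)] by blast
qed

lemma transpose_gram_reg:
  assumes "spd_kernel X k" "\<forall>i. xs i \<in> X"
  shows "transpose (gram k xs + s *\<^sub>R mat 1) = gram k xs + s *\<^sub>R mat 1"
  using assms unfolding spd_kernel_def by (simp add: transpose_def gram_def mat_def vec_eq_iff)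

lemma inner_gram_reg_mult:
  fixes xs :: "'n::finite \<Rightarrow> 'a" and v :: "real^'n"
  shows "v \<bullet> ((gram k xs + s *\<^sub>R mat 1) *v v) = gram_form k xs (($) v) + s * (v \<bullet> v)"
proof -
  have row: "((gram k xs + s *\<^sub>R mat 1) *v v) $ i = (\<Sum>j\<in>UNIV. k (xs i) (xs j) * v$j) + s * v$i" for i
  proof -
    have "((gram k xs + s *\<^sub>R mat 1) *v v) $ i
        = (\<Sum>j\<in>UNIV. (k (xs i) (xs j) + s * (if i = j then 1 else 0)) * v$j)"
      by (simp add: matrix_vector_mult_def gram_def mat_def)
    also have "\<dots> = (\<Sum>j\<in>UNIV. k (xs i) (xs j) * v$j) + (\<Sum>j\<in>UNIV. if i = j then s * v$j else 0)"
      by (subst sum.distrib[symmetric], rule sum.cong) (auto simp: algebra_simps)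
    finally show ?thesis by simp
  qed
  have "v \<bullet> ((gram k xs + s *\<^sub>R mat 1) *v v)
      = (\<Sum>i\<in>UNIV. v$i * ((\<Sum>j\<in>UNIV. k (xs i) (xs j) * v$j) + s * v$i))"
    by (simp only: inner_vec_def row inner_real_def)
  then show ?thesis
    by (simp add: inner_vec_def gram_form_def distrib_left sum.distrib sum_distrib_left algebra_simps)
qed

lemma invertible_gram_reg:
  assumes "spd_kernel X k" "\<forall>i. xs i \<in> X" "s > 0"
  shows "invertible (gram k xs + s *\<^sub>R mat 1)"
proof -
  have "v = 0" if "(gram k xs + s *\<^sub>R mat 1) *v v = 0" for v
  proof -
    have "0 = gram_form k xs (($) v) + s * (v \<bullet> v)"
      using that inner_gram_reg_mult[of v k xs s] by simp
    then have "s * (v \<bullet> v) \<le> 0" using gram_form_nonneg[OF assms(1,2), of "($) v"] by linarith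
    then have "v \<bullet> v \<le> 0" using assms(3) by (simp add: mult_le_0_iff)
    then show "v = 0" by (metis antisym inner_ge_zero inner_eq_zero_iff)
  qed
  then show ?thesis using invertible_left_inverse matrix_left_invertible_ker by blast
qed

lemma transpose_matrix_inv_symmetric:
  fixes A :: "'a::comm_semiring_1^'n^'n"
  assumes "invertible A" "transpose A = A"
  shows "transpose (matrix_inv A) = matrix_inv A"
proof -
  have inv: "A ** matrix_inv A = mat 1" "matrix_inv A ** A = mat 1"
    using someI_ex[OF assms(1)[unfolded invertible_def]] unfolding matrix_inv_def by auto
  then have "transpose (matrix_inv A) ** A = mat 1"
    by (metis matrix_transpose_mul assms(2) transpose_mat)
  then show ?thesis by (metis inv matrix_mul_assoc matrix_mul_lid matrix_mul_rid)
qed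

lemma transpose_reg_inv:
  assumes "spd_kernel X k" "\<forall>i. xs i \<in> X" "lam > 0"
  shows "transpose (reg_inv k xs lam) = reg_inv k xs lam"
  unfolding reg_inv_def
  using assms by (intro transpose_matrix_inv_symmetric invertible_gram_reg) (auto simp: transpose_gram_reg)

definition mce_coeffs :: "('a \<Rightarrow> 'a \<Rightarrow> real) \<Rightarrow> ('n::finite \<Rightarrow> 'a) \<Rightarrow> ('n \<Rightarrow> 'm::finite) \<Rightarrow> real
                         \<Rightarrow> real^'m^'n" where
  "mce_coeffs k xs y lam = reg_inv k xs lam ** label_matrix y"

lemma mce_f_component:
  assumes "spd_kernel X k" "\<forall>i. xs i \<in> X" "lam > 0"
  shows "mce_f k xs y lam x $ c = (\<Sum>j\<in>UNIV. mce_coeffs k xs y lam $ j $ c * k (xs j) x)"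
proof -
  define R where "R = reg_inv k xs lam"
  have R_sym: "R $ i $ j = R $ j $ i" for i j
  proof -
    have "transpose R $ j $ i = R $ j $ i" using transpose_reg_inv[OF assms] by (simp add: R_def)
    then show ?thesis by (simp add: transpose_def)
  qed
  have "mce_f k xs y lam x $ c = (\<Sum>i\<in>UNIV. label_matrix y $ i $ c * (\<Sum>j\<in>UNIV. R $ i $ j * k (xs j) x))"
    by (simp add: mce_f_def R_def matrix_vector_mult_def transpose_def kvec_def)
  also have "\<dots> = (\<Sum>i\<in>UNIV. \<Sum>j\<in>UNIV. label_matrix y $ i $ c * R $ j $ i * k (xs j) x)"
    unfolding sum_distrib_left by (intro sum.cong refl) (metis R_sym mult.assoc)
  also have "\<dots> = (\<Sum>j\<in>UNIV. \<Sum>i\<in>UNIV. label_matrix y $ i $ c * R $ j $ i * k (xs j) x)"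
    by (rule sum.swap)
  also have "\<dots> = (\<Sum>j\<in>UNIV. (\<Sum>i\<in>UNIV. R $ j $ i * label_matrix y $ i $ c) * k (xs j) x)"
    unfolding sum_distrib_right by (intro sum.cong refl) (simp add: mult_ac)
  also have "\<dots> = (\<Sum>j\<in>UNIV. mce_coeffs k xs y lam $ j $ c * k (xs j) x)"
    by (simp add: mce_coeffs_def R_def matrix_matrix_mult_def)
  finally show ?thesis .
qed

lemma mce_tr_norm_eq:
  assumes "spd_kernel X k" "\<forall>i. xs i \<in> X" "lam > 0"
  shows "mce_tr_norm k xs y lam = sqrt (\<Sum>c\<in>UNIV. gram_form k xs (\<lambda>i. mce_coeffs k xs y lam $ i $ c))"
proof -
  define R where "R = reg_inv k xs lam"
  define B where "B = R ** label_matrix y"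
  have "transpose (label_matrix y) ** R ** gram k xs ** R ** label_matrix y
      = transpose B ** gram k xs ** B"
    unfolding B_def R_def by (simp add: matrix_transpose_mul transpose_reg_inv[OF assms] matrix_mul_assoc)
  moreover have "(transpose B ** gram k xs ** B) $ c $ c = gram_form k xs (\<lambda>i. B $ i $ c)" for c
  proof -
    have "(transpose B ** gram k xs ** B) $ c $ c
        = (\<Sum>a\<in>UNIV. \<Sum>b\<in>UNIV. B $ b $ c * B $ a $ c * k (xs b) (xs a))"
      by (simp add: matrix_matrix_mult_def transpose_def gram_def sum_distrib_left
            sum_distrib_right algebra_simps)
    also have "\<dots> = gram_form k xs (\<lambda>i. B $ i $ c)"
      unfolding gram_form_def by (rule sum.swap)
    finally show ?thesis .
  qed
  ultimately show ?thesis by (simp add: mce_tr_norm_def trace_def B_def R_def mce_coeffs_def)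
qed

lemma mce_tr_norm_nonneg:
  assumes "spd_kernel X k" "\<forall>i. xs i \<in> X" "lam > 0"
  shows "0 \<le> mce_tr_norm k xs y lam"
  unfolding mce_tr_norm_eq[OF assms] using gram_form_nonneg[OF assms(1,2)] by (simp add: sum_nonneg)

lemma norm_mce_f_le:
  assumes "spd_kernel X k" "\<forall>i. xs i \<in> X" "lam > 0" "x \<in> X"
  shows "norm (mce_f k xs y lam x) \<le> mce_tr_norm k xs y lam * sqrt (k x x)"
proof -
  define q where "q c = gram_form k xs (\<lambda>i. mce_coeffs k xs y lam $ i $ c)" for c
  have "(mce_f k xs y lam x $ c)^2 \<le> k x x * q c" for c
    unfolding mce_f_component[OF assms(1-3)] q_def by (rule spd_kernel_Cauchy_Schwarz[OF assms(1,2,4)])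
  then have "norm (mce_f k xs y lam x) \<le> sqrt (\<Sum>c\<in>UNIV. k x x * q c)"
    unfolding norm_vec_def L2_set_def by (intro real_sqrt_le_mono sum_mono) simp
  also have "\<dots> = mce_tr_norm k xs y lam * sqrt (k x x)"
    by (simp add: mce_tr_norm_eq[OF assms(1-3)] q_def sum_distrib_left[symmetric] real_sqrt_mult
          mult.commute)
  finally show ?thesis .
qed

lemma rademacher_complexity_le_uniform_bound:
  fixes F :: "('a \<Rightarrow> real^'m) set"
  assumes P: "prob_space P" and bound: "\<And>f x. f \<in> F \<Longrightarrow> x \<in> space P \<Longrightarrow> norm (f x) \<le> C"
  shows "rademacher_complexity TYPE('n::finite) P F \<le> ennreal (2 * C)"
proof -
  let ?S = "(UNIV::'n set) \<rightarrow>\<^sub>E {-1, 1::real}"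
  let ?avg = "\<lambda>\<sigma> f Xs. norm ((2 / real CARD('n)) *\<^sub>R (\<Sum>i\<in>UNIV. \<sigma> i *\<^sub>R f (Xs i)))"
  have avg_le: "?avg \<sigma> f Xs \<le> 2 * C"
    if \<sigma>: "\<sigma> \<in> ?S" and f: "f \<in> F" and Xs: "Xs \<in> space (PiM UNIV (\<lambda>_. P))" for \<sigma> f Xs
  proof -
    have abs_sigma: "\<bar>\<sigma> i\<bar> = 1" for i
    proof -
      have "\<sigma> i \<in> {-1, 1}" using \<sigma> by (auto simp: PiE_iff)
      then show ?thesis by auto
    qed
    have "?avg \<sigma> f Xs = (2 / real CARD('n)) * norm (\<Sum>i\<in>UNIV. \<sigma> i *\<^sub>R f (Xs i))"
      by simp
    also have "\<dots> \<le> (2 / real CARD('n)) * (\<Sum>i\<in>UNIV. norm (\<sigma> i *\<^sub>R f (Xs i)))"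
      by (intro mult_left_mono norm_sum) simp
    also have "\<dots> = (2 / real CARD('n)) * (\<Sum>i\<in>UNIV. norm (f (Xs i)))"
      by (simp add: abs_sigma)
    also have "\<dots> \<le> (2 / real CARD('n)) * (\<Sum>i\<in>(UNIV::'n set). C)"
      using Xs by (intro mult_left_mono sum_mono bound[OF f]) (auto simp: space_PiM)
    finally show ?thesis by simp
  qed
  have integrand: "(\<Sum>\<sigma>\<in>?S. SUP f\<in>F. ennreal (?avg \<sigma> f Xs)) / 2 ^ CARD('n) \<le> ennreal (2 * C)"
    if Xs: "Xs \<in> space (PiM UNIV (\<lambda>_. P))" for Xs
  proof -
    have "(\<Sum>\<sigma>\<in>?S. SUP f\<in>F. ennreal (?avg \<sigma> f Xs)) \<le> (\<Sum>\<sigma>\<in>?S. ennreal (2 * C))"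
      using avg_le[OF _ _ Xs] by (intro sum_mono SUP_least ennreal_leI)
    also have "\<dots> = ennreal (2 * C) * 2 ^ CARD('n)"
      by (simp add: card_PiE numeral_2_eq_2 mult.commute)
    finally show ?thesis
      by (rule divide_right_mono_ennreal[THEN order_trans])
         (simp add: ennreal_mult_divide_eq power_eq_top_ennreal)
  qed
  have "rademacher_complexity TYPE('n) P F \<le> (\<integral>\<^sup>+ Xs. ennreal (2 * C) \<partial>PiM (UNIV::'n set) (\<lambda>_. P))"
    unfolding rademacher_complexity_def by (rule nn_integral_mono) (rule integrand)
  also have "\<dots> = ennreal (2 * C)"
    using prob_space.emeasure_space_1[OF prob_space_PiM[of "UNIV::'n set" "\<lambda>_. P"]] P by simp
  finally show ?thesis .
qed

theorem mainTheorem7: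
  fixes X :: "(real^'d) set"
    and Theta :: "'th set"
    and k :: "'th \<Rightarrow> real^'d \<Rightarrow> real^'d \<Rightarrow> real"
    and kt :: "'th \<Rightarrow> real \<Rightarrow> real"
    and Lambda :: "real set"
    and xs :: "'n::finite \<Rightarrow> real^'d"
    and y :: "'n \<Rightarrow> 'm::finite"
    and P :: "(real^'d) measure"
    and rho :: real
    and th0 :: 'th
  assumes kernels: "\<forall>th\<in>Theta. spd_kernel X (k th)"
    and Lambda_pos: "Lambda \<subseteq> {0<..}"
    and train: "\<forall>i. xs i \<in> X"
    and P_prob: "prob_space P"
    and P_space: "space P \<subseteq> X"
    and stationary: "\<forall>th\<in>Theta. (\<forall>x\<in>X. \<forall>x'\<in>X. k th x x' = kt th (norm (x - x')))
                                 \<and> (\<forall>r\<ge>0. kt th r \<ge> 0)"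
    and tr_bound: "\<forall>th\<in>Theta. \<forall>lam\<in>Lambda. mce_tr_norm (k th) xs y lam \<le> rho"
    and th0: "th0 \<in> Theta"
  shows "rademacher_complexity TYPE('n) P
           (mce_class k xs y {th \<in> Theta. kt th 0 \<le> kt th0 0} Lambda)
         \<le> ennreal (2 * rho * sqrt (kt th0 0))"
proof -
  let ?F = "mce_class k xs y {th \<in> Theta. kt th 0 \<le> kt th0 0} Lambda"
  have "norm (mce_f (k th) xs y lam x) \<le> rho * sqrt (kt th0 0)"
    if th: "th \<in> Theta" "kt th 0 \<le> kt th0 0" and lam: "lam \<in> Lambda" and x: "x \<in> X" for th lam x
  proof -
    have ker: "spd_kernel X (k th)" and lam_pos: "lam > 0"
      using kernels th lam Lambda_pos by auto
    have "k th x x = kt th 0" and kt_nonneg: "0 \<le> kt th 0" using stationary th x by auto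
    then have "norm (mce_f (k th) xs y lam x) \<le> mce_tr_norm (k th) xs y lam * sqrt (kt th 0)"
      using norm_mce_f_le[OF ker train lam_pos x] by simp
    also have "\<dots> \<le> rho * sqrt (kt th0 0)"
    proof -
      have "mce_tr_norm (k th) xs y lam \<le> rho" using tr_bound th lam by blast
      then show ?thesis
        using mce_tr_norm_nonneg[OF ker train lam_pos, of y] kt_nonneg th(2)
        by (intro mult_mono real_sqrt_le_mono) auto
    qed
    finally show ?thesis .
  qed
  then have "norm (f x) \<le> rho * sqrt (kt th0 0)" if "f \<in> ?F" and "x \<in> space P" for f x
    using that P_space unfolding mce_class_def by blast
  then have "rademacher_complexity TYPE('n) P ?F \<le> ennreal (2 * (rho * sqrt (kt th0 0)))"
    by (rule rademacher_complexity_le_uniform_bound[OF P_prob])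
  then show ?thesis by (simp add: mult.assoc)
qed

end
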